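(* Let $N<22$ be even. Then all rays and counter-rays of the Birkhoff polytope $\mathcal{B}_N$ consist of unistochastic matrices. Moreover, for $N\in\{2,4,8,12,16,20\}$ all these matrices are orthostochastic; for $N\in\{6,10,14,18\}$ they are unistochastic.
   Context: A bistochastic matrix is a real $N\times N$ matrix with nonnegative entries whose rows and columns each sum to 1; the set of them is the Birkhoff polytope $\mathcal{B}_N$. A bistochastic $B$ is unistochastic if there is a unitary $U$ with $B_{ij}=|U_{ij}|^2$ for all $i,j$, and orthostochastic if such $U$ can be chosen real orthogonal. $W_N$ is the $N\times N$ matrix with all entries $1/N$. For a permutation matrix $P$, its ray is $\{\alpha P+(1-\alpha)W_N:\alpha\ge0\}\cap\mathcal{B}_N$ and its counter-ray is $\{\alpha P+(1-\alpha)W_N:\alpha\le0\}\cap\mathcal{B}_N$. *)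

theory Defs
  imports "HOL-Analysis.Analysis"
begin

definition bistochastic :: "real^'n^'n \<Rightarrow> bool" where
  "bistochastic B \<longleftrightarrow> (\<forall>i j. B $ i $ j \<ge> 0) \<and>
     (\<forall>i. (\<Sum>j\<in>UNIV. B $ i $ j) = 1) \<and> (\<forall>j. (\<Sum>i\<in>UNIV. B $ i $ j) = 1)"

definition unitary_mat :: "complex^'n^'n \<Rightarrow> bool" where
  "unitary_mat U \<longleftrightarrow>
     (\<forall>i j. (\<Sum>k\<in>UNIV. U $ i $ k * cnj (U $ j $ k)) = (if i = j then 1 else 0))"

definition unistochastic :: "real^'n^'n \<Rightarrow> bool" where
  "unistochastic B \<longleftrightarrow> bistochastic B \<and>
     (\<exists>U::complex^'n^'n. unitary_mat U \<and> (\<forall>i j. B $ i $ j = (cmod (U $ i $ j))\<^sup>2))"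

definition orthostochastic :: "real^'n^'n \<Rightarrow> bool" where
  "orthostochastic B \<longleftrightarrow> bistochastic B \<and>
     (\<exists>Q::real^'n^'n. orthogonal_matrix Q \<and> (\<forall>i j. B $ i $ j = (Q $ i $ j)\<^sup>2))"

definition flat_mat :: "real^'n^'n" where
  "flat_mat = (\<chi> i j. 1 / real CARD('n))"

definition perm_mat :: "('n \<Rightarrow> 'n) \<Rightarrow> real^'n^'n" where
  "perm_mat \<sigma> = (\<chi> i j. if \<sigma> i = j then 1 else 0)"

definition is_perm_mat :: "real^'n^'n \<Rightarrow> bool" where
  "is_perm_mat P \<longleftrightarrow> (\<exists>\<sigma>. \<sigma> permutes (UNIV::'n set) \<and> P = perm_mat \<sigma>)"

definition ray :: "real^'n^'n \<Rightarrow> (real^'n^'n) set" where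
  "ray P = {B. \<exists>\<alpha>::real. \<alpha> \<ge> 0 \<and> B = \<alpha> *\<^sub>R P + (1 - \<alpha>) *\<^sub>R flat_mat \<and> bistochastic B}"

definition counter_ray :: "real^'n^'n \<Rightarrow> (real^'n^'n) set" where
  "counter_ray P = {B. \<exists>\<alpha>::real. \<alpha> \<le> 0 \<and> B = \<alpha> *\<^sub>R P + (1 - \<alpha>) *\<^sub>R flat_mat \<and> bistochastic B}"

end

theory Submission
  imports Defs
begin

text \<open>On the ray or counter-ray through a permutation matrix \<open>P = perm_mat \<sigma>\<close>, a
bistochastic matrix has entries \<open>a\<close> at the positions of \<open>P\<close> and \<open>b\<close> elsewhere, with
\<open>a + (N - 1) b = 1\<close>. If \<open>S\<close> is a conference matrix (zero diagonal, \<open>\<plusminus>1\<close> off the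
diagonal, \<open>S S\<^sup>T = (N - 1) I\<close>), then \<open>\<surd>a I + \<surd>b S\<close> is orthogonal when \<open>S\<close> is
antisymmetric and \<open>\<surd>a I + i \<surd>b S\<close> is unitary when \<open>S\<close> is symmetric; permuting
its rows by \<open>\<sigma>\<close> gives a matrix whose squared moduli are exactly the entries of the
bistochastic matrix. Antisymmetric conference matrices exist for \<open>N = 2, 4, 8, 12, 16, 20\<close>
and symmetric ones for \<open>N = 6, 10, 14, 18\<close>; explicit ones are checked by evaluation.\<close>

definition conference_matrix_on :: "'a set \<Rightarrow> real \<Rightarrow> ('a \<Rightarrow> 'a \<Rightarrow> real) \<Rightarrow> bool" where
  "conference_matrix_on I s S \<longleftrightarrow> (\<forall>i\<in>I. \<forall>j\<in>I.
     S i j * S i j = (if i = j then 0 else 1) \<and> S j i = s * S i j \<and>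
     (\<Sum>k\<in>I. S i k * S j k) = (if i = j then real (card I) - 1 else 0))"

lemma conference_matrix_on_reindex:
  assumes g: "bij_betw g J I" and S: "conference_matrix_on I s S"
  shows "conference_matrix_on J s (\<lambda>i j. S (g i) (g j))"
  unfolding conference_matrix_on_def
proof (intro ballI)
  fix i j assume "i \<in> J" "j \<in> J"
  then have gI: "g i \<in> I" "g j \<in> I" and ginj: "g i = g j \<longleftrightarrow> i = j"
    using g by (auto simp: bij_betw_def inj_on_def)
  have sum: "(\<Sum>k\<in>J. S (g i) (g k) * S (g j) (g k)) = (\<Sum>k\<in>I. S (g i) k * S (g j) k)"
    using sum.reindex_bij_betw[OF g] .
  show "S (g i) (g j) * S (g i) (g j) = (if i = j then 0 else 1) \<and>
      S (g j) (g i) = s * S (g i) (g j) \<and>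
      (\<Sum>k\<in>J. S (g i) (g k) * S (g j) (g k)) = (if i = j then real (card J) - 1 else 0)"
    using S gI unfolding conference_matrix_on_def sum ginj[symmetric] bij_betw_same_card[OF g]
    by blast
qed

lemma conference_matrix_on_UNIV_from_nat:
  assumes "conference_matrix_on {0..<CARD('n)} s S"
  shows "\<exists>T::'n::finite \<Rightarrow> 'n \<Rightarrow> real. conference_matrix_on UNIV s T"
proof -
  obtain g :: "'n \<Rightarrow> nat" where "bij_betw g UNIV {0..<CARD('n)}"
    using finite_same_card_bij[of "UNIV::'n set" "{0..<CARD('n)}"] by auto
  then show ?thesis using conference_matrix_on_reindex[OF _ assms] by blast
qed

lemma unitary_mat_of_real_iff:
  "unitary_mat (\<chi> i j. complex_of_real (Q $ i $ j)) \<longleftrightarrow> orthogonal_matrix (Q::real^'n^'n)"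
proof -
  have "unitary_mat (\<chi> i j. complex_of_real (Q $ i $ j)) \<longleftrightarrow>
      (\<forall>i j. (\<Sum>k\<in>UNIV. Q $ i $ k * Q $ j $ k) = (if i = j then 1 else 0))"
    unfolding unitary_mat_def by (simp flip: of_real_mult of_real_sum)
  also have "\<dots> \<longleftrightarrow> Q ** transpose Q = mat 1"
    unfolding vec_eq_iff matrix_matrix_mult_def transpose_def mat_def by simp
  finally show ?thesis
    unfolding orthogonal_matrix matrix_left_right_inverse .
qed

lemma unitary_mat_permute_rows:
  assumes "unitary_mat U" and "\<sigma> permutes UNIV"
  shows "unitary_mat (\<chi> i j. U $ \<sigma> i $ j)"
  using assms unfolding unitary_mat_def by (simp add: permutes_inj inj_eq)

text \<open>The condition \<open>z + s z\<^sup>* = 0\<close> makes the cross terms \<open>c d (z S\<^sub>p\<^sub>q + z\<^sup>* S\<^sub>q\<^sub>p)\<close>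
of \<open>U U\<^sup>*\<close> cancel: take \<open>z = 1\<close> for antisymmetric and \<open>z = \<i>\<close> for symmetric \<open>S\<close>.\<close>

lemma unitary_mat_conference_combination:
  fixes S :: "'n::finite \<Rightarrow> 'n \<Rightarrow> real"
  assumes S: "conference_matrix_on UNIV s S"
    and z: "cmod z = 1" "z + of_real s * cnj z = 0"
    and cd: "c\<^sup>2 + (real CARD('n) - 1) * d\<^sup>2 = 1"
  shows "unitary_mat (\<chi> i j. (if i = j then complex_of_real c else 0) + z * complex_of_real (d * S i j))"
    (is "unitary_mat ?U")
  unfolding unitary_mat_def
proof (intro allI)
  fix p q
  have zs: "of_real s * cnj z = - z"
    using z(2) by (simp add: eq_neg_iff_add_eq_0 add.commute)
  have "S q p = s * S p q"
    using S unfolding conference_matrix_on_def by blast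
  then have "of_real (S q p) * cnj z = of_real (S p q) * (of_real s * cnj z)"
    by (simp add: mult_ac)
  also have "\<dots> = - (z * of_real (S p q))"
    by (simp add: zs)
  finally have skew: "of_real (S q p) * cnj z + z * of_real (S p q) = 0"
    by simp
  have zz: "z * cnj z = 1"
    using z(1) by (simp add: complex_norm_square[symmetric])
  have rows: "(\<Sum>k\<in>UNIV. S p k * S q k) = (if p = q then real CARD('n) - 1 else 0)"
    using S unfolding conference_matrix_on_def by blast
  have "(\<Sum>k\<in>UNIV. ((if p = k then of_real c else 0) + z * of_real (d * S p k)) *
          cnj ((if q = k then of_real c else 0) + z * of_real (d * S q k)))
      = (\<Sum>k\<in>UNIV. (if p = k then (if q = k then of_real (c * c) else 0) else 0)
          + (if p = k then of_real (c * d) * (of_real (S q k) * cnj z) else 0)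
          + (if q = k then of_real (c * d) * (z * of_real (S p k)) else 0)
          + (z * cnj z) * of_real (d * d) * of_real (S p k * S q k))"
    by (intro sum.cong refl) (auto simp: algebra_simps)
  also have "\<dots> = (if p = q then of_real (c * c) else 0)
      + of_real (c * d) * (of_real (S q p) * cnj z + z * of_real (S p q))
      + of_real (d * d) * of_real (\<Sum>k\<in>UNIV. S p k * S q k)"
    by (simp add: sum.distrib zz algebra_simps sum_distrib_left)
  also have "\<dots> = (if p = q then 1 else 0)"
  proof -
    have "c * c + d * d * (real CARD('n) - 1) = 1"
      using cd by (simp add: power2_eq_square algebra_simps)
    then show ?thesis
      by (simp add: skew rows flip: of_real_mult of_real_add)
  qed
  finally show "(\<Sum>k\<in>UNIV. ?U $ p $ k * cnj (?U $ q $ k)) = (if p = q then 1 else 0)"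
    by simp
qed

lemma cmod_conference_combination_sq:
  assumes S: "conference_matrix_on UNIV s S" and z: "cmod z = 1"
  shows "(cmod ((if i = j then complex_of_real c else 0) + z * complex_of_real (d * S i j)))\<^sup>2
    = (if i = j then c\<^sup>2 else d\<^sup>2)"
proof -
  have "S i j * S i j = (if i = j then 0 else 1)"
    using S unfolding conference_matrix_on_def by blast
  then have "\<bar>S i j\<bar> = (if i = j then 0 else 1)"
    by (cases "i = j") (simp_all add: abs_square_eq_1 flip: power2_eq_square)
  then show ?thesis
    using z by (cases "i = j") (simp_all add: norm_mult power_mult_distrib)
qed

definition conference_unitary ::
    "('n \<Rightarrow> 'n) \<Rightarrow> real \<Rightarrow> real \<Rightarrow> complex \<Rightarrow> ('n \<Rightarrow> 'n \<Rightarrow> real) \<Rightarrow> complex^'n^'n" where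
  "conference_unitary \<sigma> a b z S = (\<chi> i j.
     (if \<sigma> i = j then complex_of_real (sqrt a) else 0) + z * complex_of_real (sqrt b * S (\<sigma> i) j))"

lemma unitary_mat_conference_unitary:
  fixes S :: "'n::finite \<Rightarrow> 'n \<Rightarrow> real"
  assumes S: "conference_matrix_on UNIV s S"
    and z: "cmod z = 1" "z + of_real s * cnj z = 0"
    and \<sigma>: "\<sigma> permutes UNIV"
    and ab: "a \<ge> 0" "b \<ge> 0" "a + (real CARD('n) - 1) * b = 1"
  shows "unitary_mat (conference_unitary \<sigma> a b z S)"
proof -
  have "(sqrt a)\<^sup>2 + (real CARD('n) - 1) * (sqrt b)\<^sup>2 = 1"
    using ab by simp
  from unitary_mat_permute_rows[OF unitary_mat_conference_combination[OF S z this] \<sigma>]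
  show ?thesis
    unfolding conference_unitary_def by simp
qed

lemma cmod_conference_unitary_sq:
  assumes "conference_matrix_on UNIV s S" and "cmod z = 1" and "a \<ge> 0" "b \<ge> 0"
  shows "(cmod (conference_unitary \<sigma> a b z S $ i $ j))\<^sup>2 = (if \<sigma> i = j then a else b)"
  using cmod_conference_combination_sq[OF assms(1,2), of "\<sigma> i" j "sqrt a" "sqrt b"] assms(3,4)
  unfolding conference_unitary_def by simp

lemma orthostochastic_imp_unistochastic:
  "orthostochastic B \<Longrightarrow> unistochastic B"
  unfolding orthostochastic_def unistochastic_def
  by (metis (no_types, lifting) unitary_mat_of_real_iff vec_lambda_beta norm_of_real power2_abs)

lemma unistochastic_if_symmetric_conference:
  fixes B :: "real^'n^'n" and S :: "'n \<Rightarrow> 'n \<Rightarrow> real"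
  assumes S: "conference_matrix_on UNIV 1 S" and \<sigma>: "\<sigma> permutes UNIV"
    and ab: "a \<ge> 0" "b \<ge> 0" "a + (real CARD('n) - 1) * b = 1"
    and B: "bistochastic B" "\<And>i j. B $ i $ j = (if \<sigma> i = j then a else b)"
  shows "unistochastic B"
proof -
  have z: "cmod \<i> = 1" "\<i> + of_real 1 * cnj \<i> = 0"
    by simp_all
  show ?thesis
    unfolding unistochastic_def
    using B unitary_mat_conference_unitary[OF S z \<sigma> ab]
      cmod_conference_unitary_sq[OF S z(1) ab(1,2)] by metis
qed

lemma orthostochastic_if_skew_conference:
  fixes B :: "real^'n^'n" and S :: "'n \<Rightarrow> 'n \<Rightarrow> real"
  assumes S: "conference_matrix_on UNIV (-1) S" and \<sigma>: "\<sigma> permutes UNIV"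
    and ab: "a \<ge> 0" "b \<ge> 0" "a + (real CARD('n) - 1) * b = 1"
    and B: "bistochastic B" "\<And>i j. B $ i $ j = (if \<sigma> i = j then a else b)"
  shows "orthostochastic B"
proof -
  define Q :: "real^'n^'n" where
    "Q = (\<chi> i j. (if \<sigma> i = j then sqrt a else 0) + sqrt b * S (\<sigma> i) j)"
  have z: "cmod 1 = 1" "1 + of_real (-1) * cnj 1 = 0"
    by simp_all
  have Q: "(\<chi> i j. complex_of_real (Q $ i $ j)) = conference_unitary \<sigma> a b 1 S"
    unfolding Q_def conference_unitary_def by (simp add: vec_eq_iff)
  have "orthogonal_matrix Q"
    using unitary_mat_conference_unitary[OF S z \<sigma> ab] by (simp flip: Q add: unitary_mat_of_real_iff)
  moreover have "B $ i $ j = (Q $ i $ j)\<^sup>2" for i j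
    using cmod_conference_unitary_sq[OF S z(1) ab(1,2), of \<sigma> i j] B(2)[of i j]
    unfolding Q[symmetric] by simp
  ultimately show ?thesis
    unfolding orthostochastic_def using B(1) by blast
qed

lemma ray_entries:
  fixes B P :: "real^'n^'n"
  assumes B: "B \<in> ray P \<union> counter_ray P" and P: "is_perm_mat P" and N: "CARD('n) \<ge> 2"
  obtains \<sigma> a b where "\<sigma> permutes UNIV" "a \<ge> 0" "b \<ge> 0" "a + (real CARD('n) - 1) * b = 1"
    "\<And>i j. B $ i $ j = (if \<sigma> i = j then a else b)"
proof -
  obtain \<alpha> where B_eq: "B = \<alpha> *\<^sub>R P + (1 - \<alpha>) *\<^sub>R flat_mat" and "bistochastic B"
    using B unfolding ray_def counter_ray_def by blast
  then have nonneg: "B $ i $ j \<ge> 0" for i j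
    unfolding bistochastic_def by blast
  obtain \<sigma> where \<sigma>: "\<sigma> permutes UNIV" and P_eq: "P = perm_mat \<sigma>"
    using P unfolding is_perm_mat_def by blast
  define a where "a = \<alpha> + (1 - \<alpha>) / real CARD('n)"
  define b where "b = (1 - \<alpha>) / real CARD('n)"
  have entries: "B $ i $ j = (if \<sigma> i = j then a else b)" for i j
    unfolding B_eq P_eq perm_mat_def flat_mat_def a_def b_def by simp
  obtain x y :: 'n where "x \<noteq> y"
    using N card_le_Suc0_iff_eq[of "UNIV :: 'n set"] by auto
  moreover obtain i where "\<sigma> i = y"
    using \<sigma> by (metis permutes_inverses(1))
  ultimately have "a \<ge> 0" "b \<ge> 0"
    using nonneg[of i y] nonneg[of i x] entries by auto
  moreover have "a + (real CARD('n) - 1) * b = 1"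
    unfolding a_def b_def by (simp add: field_simps)
  ultimately show ?thesis
    using that \<sigma> entries by blast
qed

definition list_matrix :: "int list list \<Rightarrow> nat \<Rightarrow> nat \<Rightarrow> real" where
  "list_matrix M i j = real_of_int (M ! i ! j)"

definition conference_list_2 :: "int list list" where
  "conference_list_2 = [[0, 1], [-1, 0]]"

definition conference_list_4 :: "int list list" where
  "conference_list_4 = [[0, 1, 1, 1], [-1, 0, 1, -1], [-1, -1, 0, 1], [-1, 1, -1, 0]]"

definition conference_list_6 :: "int list list" where
  "conference_list_6 = [[0, 1, 1, 1, 1, 1], [1, 0, 1, -1, -1, 1], [1, 1, 0, 1, -1, -1], [1, -1, 1, 0, 1, -1], [1, -1, -1, 1, 0, 1], [1, 1, -1, -1, 1, 0]]"

definition conference_list_8 :: "int list list" where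
  "conference_list_8 = [[0, 1, 1, 1, 1, 1, 1, 1], [-1, 0, 1, 1, -1, 1, -1, -1], [-1, -1, 0, 1, 1, -1, 1, -1], [-1, -1, -1, 0, 1, 1, -1, 1], [-1, 1, -1, -1, 0, 1, 1, -1], [-1, -1, 1, -1, -1, 0, 1, 1], [-1, 1, -1, 1, -1, -1, 0, 1], [-1, 1, 1, -1, 1, -1, -1, 0]]"

definition conference_list_10 :: "int list list" where
  "conference_list_10 = [[0, 1, 1, 1, 1, 1, 1, 1, 1, 1], [1, 0, 1, 1, 1, -1, -1, 1, -1, -1], [1, 1, 0, 1, -1, 1, -1, -1, 1, -1], [1, 1, 1, 0, -1, -1, 1, -1, -1, 1], [1, 1, -1, -1, 0, 1, 1, 1, -1, -1], [1, -1, 1, -1, 1, 0, 1, -1, 1, -1], [1, -1, -1, 1, 1, 1, 0, -1, -1, 1], [1, 1, -1, -1, 1, -1, -1, 0, 1, 1], [1, -1, 1, -1, -1, 1, -1, 1, 0, 1], [1, -1, -1, 1, -1, -1, 1, 1, 1, 0]]"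

definition conference_list_12 :: "int list list" where
  "conference_list_12 = [[0, 1, 1, 1, 1, 1, 1, 1, 1, 1, 1, 1], [-1, 0, 1, -1, 1, 1, 1, -1, -1, -1, 1, -1], [-1, -1, 0, 1, -1, 1, 1, 1, -1, -1, -1, 1], [-1, 1, -1, 0, 1, -1, 1, 1, 1, -1, -1, -1], [-1, -1, 1, -1, 0, 1, -1, 1, 1, 1, -1, -1], [-1, -1, -1, 1, -1, 0, 1, -1, 1, 1, 1, -1], [-1, -1, -1, -1, 1, -1, 0, 1, -1, 1, 1, 1], [-1, 1, -1, -1, -1, 1, -1, 0, 1, -1, 1, 1], [-1, 1, 1, -1, -1, -1, 1, -1, 0, 1, -1, 1], [-1, 1, 1, 1, -1, -1, -1, 1, -1, 0, 1, -1], [-1, -1, 1, 1, 1, -1, -1, -1, 1, -1, 0, 1], [-1, 1, -1, 1, 1, 1, -1, -1, -1, 1, -1, 0]]"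

definition conference_list_14 :: "int list list" where
  "conference_list_14 = [[0, 1, 1, 1, 1, 1, 1, 1, 1, 1, 1, 1, 1, 1], [1, 0, 1, -1, 1, 1, -1, -1, -1, -1, 1, 1, -1, 1], [1, 1, 0, 1, -1, 1, 1, -1, -1, -1, -1, 1, 1, -1], [1, -1, 1, 0, 1, -1, 1, 1, -1, -1, -1, -1, 1, 1], [1, 1, -1, 1, 0, 1, -1, 1, 1, -1, -1, -1, -1, 1], [1, 1, 1, -1, 1, 0, 1, -1, 1, 1, -1, -1, -1, -1], [1, -1, 1, 1, -1, 1, 0, 1, -1, 1, 1, -1, -1, -1], [1, -1, -1, 1, 1, -1, 1, 0, 1, -1, 1, 1, -1, -1], [1, -1, -1, -1, 1, 1, -1, 1, 0, 1, -1, 1, 1, -1], [1, -1, -1, -1, -1, 1, 1, -1, 1, 0, 1, -1, 1, 1], [1, 1, -1, -1, -1, -1, 1, 1, -1, 1, 0, 1, -1, 1], [1, 1, 1, -1, -1, -1, -1, 1, 1, -1, 1, 0, 1, -1], [1, -1, 1, 1, -1, -1, -1, -1, 1, 1, -1, 1, 0, 1], [1, 1, -1, 1, 1, -1, -1, -1, -1, 1, 1, -1, 1, 0]]"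

definition conference_list_16 :: "int list list" where
  "conference_list_16 = [[0, 1, 1, 1, 1, 1, 1, 1, 1, 1, 1, 1, 1, 1, 1, 1], [-1, 0, 1, 1, -1, 1, -1, -1, -1, 1, 1, 1, -1, 1, -1, -1], [-1, -1, 0, 1, 1, -1, 1, -1, -1, -1, 1, 1, 1, -1, 1, -1], [-1, -1, -1, 0, 1, 1, -1, 1, -1, -1, -1, 1, 1, 1, -1, 1], [-1, 1, -1, -1, 0, 1, 1, -1, -1, 1, -1, -1, 1, 1, 1, -1], [-1, -1, 1, -1, -1, 0, 1, 1, -1, -1, 1, -1, -1, 1, 1, 1], [-1, 1, -1, 1, -1, -1, 0, 1, -1, 1, -1, 1, -1, -1, 1, 1], [-1, 1, 1, -1, 1, -1, -1, 0, -1, 1, 1, -1, 1, -1, -1, 1], [-1, 1, 1, 1, 1, 1, 1, 1, 0, -1, -1, -1, -1, -1, -1, -1], [-1, -1, 1, 1, -1, 1, -1, -1, 1, 0, -1, -1, 1, -1, 1, 1], [-1, -1, -1, 1, 1, -1, 1, -1, 1, 1, 0, -1, -1, 1, -1, 1], [-1, -1, -1, -1, 1, 1, -1, 1, 1, 1, 1, 0, -1, -1, 1, -1], [-1, 1, -1, -1, -1, 1, 1, -1, 1, -1, 1, 1, 0, -1, -1, 1], [-1, -1, 1, -1, -1, -1, 1, 1, 1, 1, -1, 1, 1, 0, -1, -1], [-1, 1, -1, 1, -1, -1, -1, 1, 1, -1, 1, -1, 1, 1, 0, -1], [-1, 1, 1, -1, 1, -1, -1, -1, 1, -1, -1, 1,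 -1, 1, 1, 0]]"

definition conference_list_18 :: "int list list" where
  "conference_list_18 = [[0, 1, 1, 1, 1, 1, 1, 1, 1, 1, 1, 1, 1, 1, 1, 1, 1, 1], [1, 0, 1, 1, -1, 1, -1, -1, -1, 1, 1, -1, -1, -1, 1, -1, 1, 1], [1, 1, 0, 1, 1, -1, 1, -1, -1, -1, 1, 1, -1, -1, -1, 1, -1, 1], [1, 1, 1, 0, 1, 1, -1, 1, -1, -1, -1, 1, 1, -1, -1, -1, 1, -1], [1, -1, 1, 1, 0, 1, 1, -1, 1, -1, -1, -1, 1, 1, -1, -1, -1, 1], [1, 1, -1, 1, 1, 0, 1, 1, -1, 1, -1, -1, -1, 1, 1, -1, -1, -1], [1, -1, 1, -1, 1, 1, 0, 1, 1, -1, 1, -1, -1, -1, 1, 1, -1, -1], [1, -1, -1, 1, -1, 1, 1, 0, 1, 1, -1, 1, -1, -1, -1, 1, 1, -1], [1, -1, -1, -1, 1, -1, 1, 1, 0, 1, 1, -1, 1, -1, -1, -1, 1, 1], [1, 1, -1, -1, -1, 1, -1, 1, 1, 0, 1, 1, -1, 1, -1, -1, -1, 1], [1, 1, 1, -1, -1, -1, 1, -1, 1, 1, 0, 1, 1, -1, 1, -1, -1, -1], [1, -1, 1, 1, -1, -1, -1, 1, -1, 1, 1, 0, 1, 1, -1, 1, -1, -1], [1, -1, -1, 1, 1, -1, -1, -1, 1, -1, 1, 1, 0, 1, 1, -1, 1, -1], [1, -1, -1, -1, 1, 1, -1, -1, -1, 1, -1, 1, 1, 0, 1, 1, -1, 1],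 [1, 1, -1, -1, -1, 1, 1, -1, -1, -1, 1, -1, 1, 1, 0, 1, 1, -1], [1, -1, 1, -1, -1, -1, 1, 1, -1, -1, -1, 1, -1, 1, 1, 0, 1, 1], [1, 1, -1, 1, -1, -1, -1, 1, 1, -1, -1, -1, 1, -1, 1, 1, 0, 1], [1, 1, 1, -1, 1, -1, -1, -1, 1, 1, -1, -1, -1, 1, -1, 1, 1, 0]]"

definition conference_list_20 :: "int list list" where
  "conference_list_20 = [[0, 1, 1, 1, 1, 1, 1, 1, 1, 1, 1, 1, 1, 1, 1, 1, 1, 1, 1, 1], [-1, 0, 1, -1, -1, 1, 1, 1, 1, -1, 1, -1, 1, -1, -1, -1, -1, 1, 1, -1], [-1, -1, 0, 1, -1, -1, 1, 1, 1, 1, -1, 1, -1, 1, -1, -1, -1, -1, 1, 1], [-1, 1, -1, 0, 1, -1, -1, 1, 1, 1, 1, -1, 1, -1, 1, -1, -1, -1, -1, 1], [-1, 1, 1, -1, 0, 1, -1, -1, 1, 1, 1, 1, -1, 1, -1, 1, -1, -1, -1, -1], [-1, -1, 1, 1, -1, 0, 1, -1, -1, 1, 1, 1, 1, -1, 1, -1, 1, -1, -1, -1], [-1, -1, -1, 1, 1, -1, 0, 1, -1, -1, 1, 1, 1, 1, -1, 1, -1, 1, -1, -1], [-1, -1, -1, -1, 1, 1, -1, 0, 1, -1, -1, 1, 1, 1, 1, -1, 1, -1, 1, -1], [-1, -1, -1, -1, -1, 1, 1, -1, 0, 1, -1, -1, 1, 1, 1, 1, -1, 1, -1, 1], [-1,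 1, -1, -1, -1, -1, 1, 1, -1, 0, 1, -1, -1, 1, 1, 1, 1, -1, 1, -1], [-1, -1, 1, -1, -1, -1, -1, 1, 1, -1, 0, 1, -1, -1, 1, 1, 1, 1, -1, 1], [-1, 1, -1, 1, -1, -1, -1, -1, 1, 1, -1, 0, 1, -1, -1, 1, 1, 1, 1, -1], [-1, -1, 1, -1, 1, -1, -1, -1, -1, 1, 1, -1, 0, 1, -1, -1, 1, 1, 1, 1], [-1, 1, -1, 1, -1, 1, -1, -1, -1, -1, 1, 1, -1, 0, 1, -1, -1, 1, 1, 1], [-1, 1, 1, -1, 1, -1, 1, -1, -1, -1, -1, 1, 1, -1, 0, 1, -1, -1, 1, 1], [-1, 1, 1, 1, -1, 1, -1, 1, -1, -1, -1, -1, 1, 1, -1, 0, 1, -1, -1, 1], [-1, 1, 1, 1, 1, -1, 1, -1, 1, -1, -1, -1, -1, 1, 1, -1, 0, 1, -1, -1], [-1, -1, 1, 1, 1, 1, -1, 1, -1, 1, -1, -1, -1, -1, 1, 1, -1, 0, 1, -1], [-1, -1, -1, 1, 1, 1, 1, -1, 1, -1, 1, -1, -1, -1, -1, 1, 1, -1, 0, 1], [-1, 1, -1, -1, 1, 1, 1, 1, -1, 1, -1, 1, -1, -1, -1, -1, 1, 1, -1, 0]]"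

lemma skew_conference_matrix_exists:
  assumes "CARD('n) \<in> {2, 4, 8, 12, 16, 20}"
  shows "\<exists>S::'n::finite \<Rightarrow> 'n \<Rightarrow> real. conference_matrix_on UNIV (-1) S"
proof -
  have "conference_matrix_on {0..<2} (-1) (list_matrix conference_list_2)"
    by code_simp
  moreover
  have "conference_matrix_on {0..<4} (-1) (list_matrix conference_list_4)"
    by code_simp
  moreover
  have "conference_matrix_on {0..<8} (-1) (list_matrix conference_list_8)"
    by code_simp
  moreover
  have "conference_matrix_on {0..<12} (-1) (list_matrix conference_list_12)"
    by code_simp
  moreover
  have "conference_matrix_on {0..<16} (-1) (list_matrix conference_list_16)"
    by code_simp
  moreover
  have "conference_matrix_on {0..<20} (-1) (list_matrix conference_list_20)"
    by code_simp
  ultimately show ?thesis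
    using assms by (auto intro: conference_matrix_on_UNIV_from_nat)
qed

lemma symmetric_conference_matrix_exists:
  assumes "CARD('n) \<in> {6, 10, 14, 18}"
  shows "\<exists>S::'n::finite \<Rightarrow> 'n \<Rightarrow> real. conference_matrix_on UNIV 1 S"
proof -
  have "conference_matrix_on {0..<6} 1 (list_matrix conference_list_6)"
    by code_simp
  moreover
  have "conference_matrix_on {0..<10} 1 (list_matrix conference_list_10)"
    by code_simp
  moreover
  have "conference_matrix_on {0..<14} 1 (list_matrix conference_list_14)"
    by code_simp
  moreover
  have "conference_matrix_on {0..<18} 1 (list_matrix conference_list_18)"
    by code_simp
  ultimately show ?thesis
    using assms by (auto intro: conference_matrix_on_UNIV_from_nat)
qed

lemma ray_imp_bistochastic:
  "B \<in> ray P \<union> counter_ray P \<Longrightarrow> bistochastic B"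
  unfolding ray_def counter_ray_def by blast

lemma orthostochastic_on_rays:
  fixes P B :: "real^'n^'n"
  assumes "CARD('n) \<in> {2, 4, 8, 12, 16, 20}" and "is_perm_mat P" and "B \<in> ray P \<union> counter_ray P"
  shows "orthostochastic B"
proof -
  obtain S :: "'n \<Rightarrow> 'n \<Rightarrow> real" where S: "conference_matrix_on UNIV (-1) S"
    using skew_conference_matrix_exists[OF assms(1)] by blast
  have "CARD('n) \<ge> 2"
    using assms(1) by auto
  then show ?thesis
    by (rule ray_entries[OF assms(3,2)])
      (rule orthostochastic_if_skew_conference[OF S _ _ _ _ ray_imp_bistochastic[OF assms(3)]])
qed

lemma unistochastic_on_rays:
  fixes P B :: "real^'n^'n"
  assumes "CARD('n) \<in> {6, 10, 14, 18}" and "is_perm_mat P" and "B \<in> ray P \<union> counter_ray P"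
  shows "unistochastic B"
proof -
  obtain S :: "'n \<Rightarrow> 'n \<Rightarrow> real" where S: "conference_matrix_on UNIV 1 S"
    using symmetric_conference_matrix_exists[OF assms(1)] by blast
  have "CARD('n) \<ge> 2"
    using assms(1) by auto
  then show ?thesis
    by (rule ray_entries[OF assms(3,2)])
      (rule unistochastic_if_symmetric_conference[OF S _ _ _ _ ray_imp_bistochastic[OF assms(3)]])
qed

theorem mainTheorem4:
  assumes "even CARD('n)" and "CARD('n) < 22"
  shows "(\<forall>P::real^'n^'n. is_perm_mat P \<longrightarrow>
            (\<forall>B \<in> ray P \<union> counter_ray P. unistochastic B))
       \<and> (CARD('n) \<in> {2,4,8,12,16,20} \<longrightarrow>
            (\<forall>P::real^'n^'n. is_perm_mat P \<longrightarrow>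
               (\<forall>B \<in> ray P \<union> counter_ray P. orthostochastic B)))
       \<and> (CARD('n) \<in> {6,10,14,18} \<longrightarrow>
            (\<forall>P::real^'n^'n. is_perm_mat P \<longrightarrow>
               (\<forall>B \<in> ray P \<union> counter_ray P. unistochastic B)))"
proof -
  obtain k where k: "CARD('n) = 2 * k"
    using assms(1) by (elim evenE)
  moreover have "0 < CARD('n)"
    by simp
  ultimately have "k \<in> {1..10}"
    using assms(2) by auto
  then have "k \<in> {1, 2, 4, 6, 8, 10} \<or> k \<in> {3, 5, 7, 9}"
    by simp presburger
  then have "CARD('n) \<in> {2, 4, 8, 12, 16, 20} \<or> CARD('n) \<in> {6, 10, 14, 18}"
    using k by auto
  then show ?thesis
    using orthostochastic_on_rays unistochastic_on_rays orthostochastic_imp_unistochastic by blast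
qed

end
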